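(* Let $R$ be a commutative elementary divisor domain and let $E=\mathrm{diag}(\varepsilon_1,\dots,\varepsilon_n)$, $\Phi=\mathrm{diag}(\varphi_1,\dots,\varphi_n)$ be nonsingular $d$-matrices with $\varphi_i\mid\varepsilon_i$ for all $i$. Then every class $\mathbf G_\Phi L=\{HL:H\in\mathbf G_\Phi\}$, $L\in\mathbf L(E,\Phi)$, contains exactly one element of $\mathbf V(E,\Phi)$ if and only if the following holds: for every index $i\in\{2,\dots,n\}$ such that $\varphi_i$ and $\varphi_{i-1}$ are not associates, every non-unit divisor $\delta$ of $\varphi_i/\varphi_{i-1}$ satisfies $\big(\delta,\ \frac{\varphi_i}{(\varphi_i,\varepsilon_{i-1})}\big)\ne1$.
   Context: Elementary divisor domain: commutative integral domain over which every matrix is equivalent to a $d$-matrix (diagonal $\mathrm{diag}(\varphi_1,\dots)$ with $\varphi_i\mid\varphi_{i+1}$). $\mathbf G_\Phi=\{H\in GL_n(R):\exists K\in GL_n(R),\ H\Phi=\Phi K\}$; $\mathbf L(E,\Phi)=\{L\in GL_n(R):\exists S\in M_n(R),\ LE=\Phi S\}$. For $f\in R$, $K(f)$ is a fixed complete system of representatives of the residue classes of $R$ modulo $fR$. The Kazimirskii set $\mathbf V(E,\Phi)$ is the set of lower unitriangular $n\times n$ matrices whose entry in position $(i,j)$, $i>j$, equals $\frac{\varphi_i}{(\varphi_i,\varepsilon_j)}k_{ij}$ with $k_{ij}\in K\big(\frac{(\varphi_i,\varepsilon_j)}{\varphi_j}\big)$. *)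

theory Defs
  imports "Jordan_Normal_Form.Determinant"
begin

text \<open>Indices are 0-based: the paper's index i in 1..n corresponds to i-1 here.\<close>

definition GL :: "nat \<Rightarrow> 'a::comm_ring_1 mat set" where
  "GL n = {A \<in> carrier_mat n n. invertible_mat A}"

definition mat_equiv :: "'a::comm_ring_1 mat \<Rightarrow> 'a mat \<Rightarrow> bool" where
  "mat_equiv A B \<longleftrightarrow> (\<exists>P Q. P \<in> GL (dim_row A) \<and> Q \<in> GL (dim_col A) \<and> B = P * A * Q)"

definition d_matrix :: "'a::comm_ring_1 mat \<Rightarrow> bool" where
  "d_matrix D \<longleftrightarrow>
     (\<forall>i < dim_row D. \<forall>j < dim_col D. i \<noteq> j \<longrightarrow> D $$ (i,j) = 0) \<and>
     (\<forall>i. Suc i < dim_row D \<and> Suc i < dim_col D \<longrightarrow> D $$ (i,i) dvd D $$ (Suc i, Suc i))"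

definition elementary_divisor_domain :: "'a::idom itself \<Rightarrow> bool" where
  "elementary_divisor_domain TYPE('a) \<longleftrightarrow>
     (\<forall>m k. \<forall>A::'a mat. A \<in> carrier_mat m k \<longrightarrow> (\<exists>D. d_matrix D \<and> mat_equiv A D))"

definition is_gcd_fun :: "('a::comm_ring_1 \<Rightarrow> 'a \<Rightarrow> 'a) \<Rightarrow> bool" where
  "is_gcd_fun g \<longleftrightarrow> (\<forall>a b. g a b dvd a \<and> g a b dvd b \<and> (\<forall>d. d dvd a \<and> d dvd b \<longrightarrow> d dvd g a b))"

definition is_residue_system :: "('a::comm_ring_1 \<Rightarrow> 'a set) \<Rightarrow> bool" where
  "is_residue_system K \<longleftrightarrow> (\<forall>f a. \<exists>!k. k \<in> K f \<and> f dvd (a - k))"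

definition G_Phi :: "'a::comm_ring_1 mat \<Rightarrow> 'a mat set" where
  "G_Phi Phi = {H \<in> GL (dim_row Phi). \<exists>K \<in> GL (dim_row Phi). H * Phi = Phi * K}"

definition L_set :: "'a::comm_ring_1 mat \<Rightarrow> 'a mat \<Rightarrow> 'a mat set" where
  "L_set E Phi = {L \<in> GL (dim_row Phi). \<exists>S \<in> carrier_mat (dim_row Phi) (dim_row Phi). L * E = Phi * S}"

definition V_set :: "('a::idom_divide \<Rightarrow> 'a \<Rightarrow> 'a) \<Rightarrow> ('a \<Rightarrow> 'a set) \<Rightarrow> 'a mat \<Rightarrow> 'a mat \<Rightarrow> 'a mat set" where
  "V_set g K E Phi = {V \<in> carrier_mat (dim_row Phi) (dim_row Phi).
      (\<forall>i < dim_row Phi. V $$ (i,i) = 1) \<and>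
      (\<forall>i j. i < j \<and> j < dim_row Phi \<longrightarrow> V $$ (i,j) = 0) \<and>
      (\<forall>i j. j < i \<and> i < dim_row Phi \<longrightarrow>
         (\<exists>k \<in> K (g (Phi $$ (i,i)) (E $$ (j,j)) div Phi $$ (j,j)).
            V $$ (i,j) = (Phi $$ (i,i) div g (Phi $$ (i,i)) (E $$ (j,j))) * k))}"

end

(*
  An element H of GL_n(R) lies in G_Phi iff phi_i/phi_j divides H_ij for all j < i, and L
  lies in L(E,Phi) iff phi_i divides L_ij eps_j. The entries of V(E,Phi) below the diagonal
  are of the form (phi_i/(phi_i,eps_j)) k_ij with k_ij running through a residue system modulo
  (phi_i,eps_j)/phi_j, whose product with phi_i/(phi_i,eps_j) is phi_i/phi_j. Hence two
  elements of V(E,Phi) in the same class coincide: comparing columns from the right, the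
  factor in G_Phi between them is the identity.

  If the condition fails at i, with delta a non-unit divisor of phi_i/phi_(i-1) coprime to
  a = phi_i/(phi_i,eps_(i-1)), choose u delta + v a = 1 and let L be the identity with the
  block [u, -v; a, delta] in rows and columns i-1, i. Then L is in L(E,Phi), but the (i,i)
  entry of H L is divisible by delta for every H in G_Phi, so it is never 1.

  If the condition holds, let D_t be the trailing principal minor of L on the indices >= t.
  Modulo phi_i/(phi_i,eps_(i-1)) the matrix L is block upper triangular and det L is a unit,
  so D_i is coprime to phi_i/(phi_i,eps_(i-1)), and by the condition also to phi_i/phi_(i-1).
  Inductively some sum over t <= i of r_t (phi_i/phi_t) D_t equals 1; the same combination of
  rows of the adjugates of the trailing submatrices is a row with the divisibility of G_Phi
  whose product with L is the i-th unit vector on the columns >= i. Subtracting multiples of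
  the rows already built for smaller indices brings the remaining entries into the residue
  systems.
*)
theory Submission
  imports Defs
begin

lemma index_mult_mat_sum:
  assumes "A \<in> carrier_mat nr m" "B \<in> carrier_mat m nc" "i < nr" "j < nc"
  shows "(A * B) $$ (i,j) = (\<Sum>k = 0..<m. A $$ (i,k) * B $$ (k,j))"
  using assms by (auto simp: scalar_prod_def intro!: sum.cong)

lemma mult_diagonal_mat_right:
  assumes A: "A \<in> carrier_mat n n" and D: "D \<in> carrier_mat n n" "diagonal_mat D"
    and ij: "i < n" "j < n"
  shows "(A * D) $$ (i,j) = A $$ (i,j) * D $$ (j,j)"
proof -
  have "(A * D) $$ (i,j) = (\<Sum>k = 0..<n. if k = j then A $$ (i,j) * D $$ (j,j) else 0)"
    unfolding index_mult_mat_sum[OF A D(1) ij]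
    by (rule sum.cong) (use D ij in \<open>auto simp: diagonal_mat_def\<close>)
  thus ?thesis using ij by simp
qed

lemma mult_diagonal_mat_left:
  assumes A: "A \<in> carrier_mat n n" and D: "D \<in> carrier_mat n n" "diagonal_mat D"
    and ij: "i < n" "j < n"
  shows "(D * A) $$ (i,j) = D $$ (i,i) * A $$ (i,j)"
proof -
  have "(D * A) $$ (i,j) = (\<Sum>k = 0..<n. if k = i then D $$ (i,i) * A $$ (i,j) else 0)"
    unfolding index_mult_mat_sum[OF D(1) A ij]
    by (rule sum.cong) (use D ij in \<open>auto simp: diagonal_mat_def\<close>)
  thus ?thesis using ij by simp
qed

lemma d_matrix_diagonal_mat: "d_matrix D \<Longrightarrow> diagonal_mat D"
  unfolding d_matrix_def diagonal_mat_def by blast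

lemma d_matrix_diag_dvd:
  assumes "d_matrix D" "D \<in> carrier_mat n n" "l \<le> m" "m < n"
  shows "D $$ (l,l) dvd D $$ (m,m)"
  using assms(3,4)
proof (induction m rule: dec_induct)
  case (step k)
  have "D $$ (l,l) dvd D $$ (k,k)" using step.IH step.prems by simp
  also have "D $$ (k,k) dvd D $$ (Suc k, Suc k)"
    using step.prems assms(1,2) unfolding d_matrix_def by auto
  finally show ?case .
qed simp

lemma d_matrix_diag_nonzero:
  fixes D :: "'a::idom mat"
  assumes "d_matrix D" "D \<in> carrier_mat n n" "det D \<noteq> 0" "l < n"
  shows "D $$ (l,l) \<noteq> 0"
proof
  assume "D $$ (l,l) = 0"
  have "det D = prod_list (diag_mat D)"
    by (rule det_upper_triangular)
      (use assms(1,2) d_matrix_diagonal_mat[of D] in \<open>auto simp: diagonal_mat_def\<close>)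
  also have "\<dots> = 0"
    using \<open>D $$ (l,l) = 0\<close> assms(2,4) by (auto simp: prod_list_zero_iff diag_mat_def)
  finally show False using assms(3) by simp
qed

lemma invertible_mat_obtain_inverse:
  fixes A :: "'a::comm_ring_1 mat"
  assumes "A \<in> carrier_mat n n" "invertible_mat A"
  obtains B where "B \<in> carrier_mat n n" "A * B = 1\<^sub>m n" "B * A = 1\<^sub>m n"
proof -
  from assms(2) obtain B where AB: "A * B = 1\<^sub>m (dim_row A)" "B * A = 1\<^sub>m (dim_row B)"
    unfolding invertible_mat_def inverts_mat_def by auto
  have "dim_col B = n" "dim_row B = n"
    using arg_cong[OF AB(1), of dim_col] arg_cong[OF AB(2), of dim_col] assms(1) by auto
  thus thesis using that AB assms(1) by auto
qed

lemma invertible_mat_iff_det_dvd_1: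
  fixes A :: "'a::comm_ring_1 mat"
  assumes A: "A \<in> carrier_mat n n"
  shows "invertible_mat A \<longleftrightarrow> det A dvd 1"
proof
  assume "invertible_mat A"
  then obtain B where B: "B \<in> carrier_mat n n" "A * B = 1\<^sub>m n"
    using invertible_mat_obtain_inverse[OF A] by metis
  have "det A * det B = 1" using det_mult[OF A B(1)] B(2) by simp
  thus "det A dvd 1" by (metis dvdI)
next
  assume "det A dvd 1"
  then obtain w where w: "1 = det A * w" by (elim dvdE)
  define B where "B = w \<cdot>\<^sub>m adj_mat A"
  have B: "B \<in> carrier_mat n n" using adj_mat(1)[OF A] unfolding B_def by simp
  have "A * B = w \<cdot>\<^sub>m (A * adj_mat A)" "B * A = w \<cdot>\<^sub>m (adj_mat A * A)"
    unfolding B_def using A adj_mat(1)[OF A] by (simp_all add: mult_smult_distrib mult_smult_assoc_mat)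
  moreover have "w \<cdot>\<^sub>m (det A \<cdot>\<^sub>m 1\<^sub>m n) = 1\<^sub>m n"
    by (rule eq_matI) (auto simp: w[symmetric] mult.commute[of w])
  ultimately have "A * B = 1\<^sub>m n" "B * A = 1\<^sub>m n"
    unfolding adj_mat(2,3)[OF A] by simp_all
  thus "invertible_mat A" unfolding invertible_mat_def inverts_mat_def using A B by auto
qed

lemma dvd_prod_diff:
  fixes f h :: "'b \<Rightarrow> 'a::comm_ring_1"
  assumes "finite S" "\<And>k. k \<in> S \<Longrightarrow> c dvd f k - h k"
  shows "c dvd prod f S - prod h S"
  using assms
proof (induction S rule: finite_induct)
  case (insert x F)
  have e: "prod f (insert x F) - prod h (insert x F) = (f x - h x) * prod f F + h x * (prod f F - prod h F)"
    using insert.hyps by (simp add: algebra_simps)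
  show ?case unfolding e using insert by (intro dvd_add dvd_mult2 dvd_mult) auto
qed simp

lemma dvd_det_diff:
  fixes A B :: "'a::comm_ring_1 mat"
  assumes A: "A \<in> carrier_mat n n" and B: "B \<in> carrier_mat n n"
    and d: "\<And>i j. i < n \<Longrightarrow> j < n \<Longrightarrow> c dvd A $$ (i,j) - B $$ (i,j)"
  shows "c dvd det A - det B"
proof -
  have "det A - det B = (\<Sum>p \<in> {p. p permutes {0..<n}}.
      signof p * ((\<Prod>i = 0..<n. A $$ (i, p i)) - (\<Prod>i = 0..<n. B $$ (i, p i))))"
    unfolding det_def'[OF A] det_def'[OF B] by (simp add: sum_subtractf right_diff_distrib)
  also have "c dvd \<dots>"
  proof (intro dvd_sum dvd_mult dvd_prod_diff)
    fix p i assume "p \<in> {p. p permutes {0..<n}}" "i \<in> {0..<n}"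
    thus "c dvd A $$ (i, p i) - B $$ (i, p i)" using d permutes_in_image by fastforce
  qed simp
  finally show ?thesis .
qed

lemma mult_col_unitriangular:
  fixes G V :: "'a::comm_ring_1 mat"
  assumes G: "G \<in> carrier_mat n n" and V: "V \<in> carrier_mat n n"
    and V_diag: "\<And>i. i < n \<Longrightarrow> V $$ (i,i) = 1"
    and V_upper: "\<And>i j. i < j \<Longrightarrow> j < n \<Longrightarrow> V $$ (i,j) = 0"
    and G_right: "\<And>r c. j < c \<Longrightarrow> c < n \<Longrightarrow> r < n \<Longrightarrow> G $$ (r,c) = (if r = c then 1 else 0)"
    and rj: "r < n" "j < n"
  shows "(G * V) $$ (r,j) = G $$ (r,j) + (if j < r then V $$ (r,j) else 0)"
proof -
  have "(G * V) $$ (r,j) = (\<Sum>k = 0..<n. (if k = j then G $$ (r,j) else 0)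
      + (if k = r then (if j < r then V $$ (r,j) else 0) else 0))"
    unfolding index_mult_mat_sum[OF G V rj]
  proof (rule sum.cong[OF refl])
    fix k assume "k \<in> {0..<n}"
    thus "G $$ (r,k) * V $$ (k,j) = (if k = j then G $$ (r,j) else 0)
        + (if k = r then (if j < r then V $$ (r,j) else 0) else 0)"
      using V_diag V_upper G_right[of k r] rj by (cases k j rule: linorder_cases) auto
  qed
  thus ?thesis using rj by (simp add: sum.distrib)
qed

definition embed_block :: "nat \<Rightarrow> nat set \<Rightarrow> (nat \<Rightarrow> nat \<Rightarrow> 'a::comm_ring_1) \<Rightarrow> 'a mat" where
  "embed_block n S f = mat n n (\<lambda>(r,c). if r \<in> S \<and> c \<in> S then f r c else if r = c then 1 else 0)"

lemma embed_block_carrier: "embed_block n S f \<in> carrier_mat n n"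
  unfolding embed_block_def by simp

lemma embed_block_mult:
  assumes S: "S \<subseteq> {..<n}"
  shows "embed_block n S f * embed_block n S h = embed_block n S (\<lambda>r c. \<Sum>k\<in>S. f r k * h k c)"
proof (rule eq_matI)
  fix r c assume "r < dim_row (embed_block n S (\<lambda>r c. \<Sum>k\<in>S. f r k * h k c))"
    "c < dim_col (embed_block n S (\<lambda>r c. \<Sum>k\<in>S. f r k * h k c))"
  hence rc: "r < n" "c < n" by (simp_all add: embed_block_def)
  let ?A = "embed_block n S f" and ?B = "embed_block n S h"
  have fin: "finite S" using S finite_subset by blast
  have prod: "(?A * ?B) $$ (r,c) = (\<Sum>k = 0..<n. ?A $$ (r,k) * ?B $$ (k,c))"
    by (rule index_mult_mat_sum[OF embed_block_carrier embed_block_carrier rc])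
  show "(?A * ?B) $$ (r,c) = embed_block n S (\<lambda>r c. \<Sum>k\<in>S. f r k * h k c) $$ (r,c)"
  proof (cases "r \<in> S")
    case True
    have "(\<Sum>k = 0..<n. ?A $$ (r,k) * ?B $$ (k,c)) = (\<Sum>k\<in>S. f r k * ?B $$ (k,c))"
      by (rule sum.mono_neutral_cong_right) (use S True rc in \<open>auto simp: embed_block_def\<close>)
    also have "\<dots> = (if c \<in> S then (\<Sum>k\<in>S. f r k * h k c) else 0)"
      using S rc by (auto simp: embed_block_def intro!: sum.neutral sum.cong)
    finally show ?thesis unfolding prod using True rc by (auto simp: embed_block_def)
  next
    case False
    have "(\<Sum>k = 0..<n. ?A $$ (r,k) * ?B $$ (k,c)) = (\<Sum>k = 0..<n. if k = r then ?B $$ (r,c) else 0)"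
      by (rule sum.cong) (use False rc in \<open>auto simp: embed_block_def\<close>)
    thus ?thesis unfolding prod using False rc by (auto simp: embed_block_def)
  qed
qed (simp_all add: embed_block_def)

lemma embed_block_eq_one:
  assumes "\<And>r c. r \<in> S \<Longrightarrow> c \<in> S \<Longrightarrow> f r c = (if r = c then 1 else 0)"
  shows "embed_block n S f = 1\<^sub>m n"
  using assms by (intro eq_matI) (auto simp: embed_block_def)

lemma invertible_embed_block_2x2:
  fixes a b c d :: "'a::comm_ring_1"
  assumes pi: "p < n" "i < n" "p \<noteq> i" and det: "a * d - b * c = 1"
  shows "invertible_mat (embed_block n {p,i}
    (\<lambda>r s. if r = p then (if s = p then a else b) else (if s = p then c else d)))"
    (is "invertible_mat ?L")
proof -
  let ?M = "embed_block n {p,i} (\<lambda>r s. if r = p then (if s = p then d else - b) else (if s = p then - c else a))"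
  have S: "{p,i} \<subseteq> {..<n}" using pi by auto
  have "?L * ?M = 1\<^sub>m n"
    unfolding embed_block_mult[OF S] by (intro embed_block_eq_one) (use pi det in \<open>auto simp: algebra_simps\<close>)
  moreover have "det (?L * ?M) = det ?L * det ?M" by (rule det_mult[OF embed_block_carrier embed_block_carrier])
  ultimately have "det ?L * det ?M = 1" by simp
  thus ?thesis unfolding invertible_mat_iff_det_dvd_1[OF embed_block_carrier] by (rule dvdI[OF sym])
qed

definition lower_right_submat :: "'a mat \<Rightarrow> nat \<Rightarrow> 'a mat" where
  "lower_right_submat A t = mat (dim_row A - t) (dim_col A - t) (\<lambda>(r,c). A $$ (r + t, c + t))"

definition trailing_minor :: "'a::comm_ring_1 mat \<Rightarrow> nat \<Rightarrow> 'a" where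
  "trailing_minor A t = det (lower_right_submat A t)"

lemma lower_right_submat_carrier:
  "A \<in> carrier_mat n n \<Longrightarrow> lower_right_submat A t \<in> carrier_mat (n - t) (n - t)"
  unfolding lower_right_submat_def by simp

lemma trailing_minor_0: "A \<in> carrier_mat n n \<Longrightarrow> trailing_minor A 0 = det A"
  unfolding trailing_minor_def lower_right_submat_def by (rule arg_cong[of _ _ det], rule eq_matI) auto

lemma dvd_det_diff_block:
  fixes A :: "'a::idom mat"
  assumes A: "A \<in> carrier_mat n n" and t: "t \<le> n"
    and d: "\<And>r c. t \<le> r \<Longrightarrow> r < n \<Longrightarrow> c < t \<Longrightarrow> d dvd A $$ (r,c)"
  shows "d dvd det A - det (mat t t (\<lambda>(r,c). A $$ (r,c))) * trailing_minor A t"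
proof -
  define A1 where "A1 = mat t t (\<lambda>(r,c). A $$ (r,c))"
  define A2 where "A2 = mat t (n - t) (\<lambda>(r,c). A $$ (r, c + t))"
  define A' where "A' = four_block_mat A1 A2 (0\<^sub>m (n - t) t) (lower_right_submat A t)"
  have A1: "A1 \<in> carrier_mat t t" and A2: "A2 \<in> carrier_mat t (n - t)"
    unfolding A1_def A2_def by auto
  have D: "lower_right_submat A t \<in> carrier_mat (n - t) (n - t)"
    by (rule lower_right_submat_carrier[OF A])
  have A': "A' \<in> carrier_mat n n"
    unfolding A'_def using four_block_carrier_mat[OF A1 D] t by simp
  have "det A' = det A1 * trailing_minor A t"
    unfolding A'_def trailing_minor_def by (rule det_four_block_mat_lower_left_zero[OF A1 A2 refl D])
  moreover have "d dvd det A - det A'"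
  proof (rule dvd_det_diff[OF A A'])
    fix r c assume rc: "r < n" "c < n"
    have "A' $$ (r,c) = (if t \<le> r \<and> c < t then 0 else A $$ (r,c))"
      unfolding A'_def using rc A1 A2 D t A
      by (auto simp: A1_def A2_def lower_right_submat_def)
    thus "d dvd A $$ (r,c) - A' $$ (r,c)" using d rc by auto
  qed
  ultimately show ?thesis unfolding A1_def by simp
qed

definition trailing_adj_row :: "'a::comm_ring_1 mat \<Rightarrow> nat \<Rightarrow> nat \<Rightarrow> nat \<Rightarrow> 'a" where
  "trailing_adj_row A t i l = (if t \<le> l then adj_mat (lower_right_submat A t) $$ (i - t, l - t) else 0)"

lemma trailing_adj_row_mult:
  fixes A :: "'a::comm_ring_1 mat"
  assumes A: "A \<in> carrier_mat n n" and ti: "t \<le> i" "i < n" and m: "t \<le> m" "m < n"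
  shows "(\<Sum>l = 0..<n. trailing_adj_row A t i l * A $$ (l,m)) = (if m = i then trailing_minor A t else 0)"
proof -
  let ?D = "lower_right_submat A t"
  have D: "?D \<in> carrier_mat (n - t) (n - t)" by (rule lower_right_submat_carrier[OF A])
  have adj: "adj_mat ?D \<in> carrier_mat (n - t) (n - t)" using adj_mat(1)[OF D] .
  have "(\<Sum>l = 0..<n. trailing_adj_row A t i l * A $$ (l,m))
      = (\<Sum>l = t..<n. trailing_adj_row A t i l * A $$ (l,m))"
    by (rule sum.mono_neutral_right) (auto simp: trailing_adj_row_def)
  also have "\<dots> = (\<Sum>k = 0..<n - t. trailing_adj_row A t i (k + t) * A $$ (k + t, m))"
    using ti sum.shift_bounds_nat_ivl[of _ 0 t "n - t"] by simp
  also have "\<dots> = (\<Sum>k = 0..<n - t. adj_mat ?D $$ (i - t, k) * ?D $$ (k, m - t))"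
    by (rule sum.cong[OF refl]) (use A m in \<open>auto simp: trailing_adj_row_def lower_right_submat_def\<close>)
  also have "\<dots> = (adj_mat ?D * ?D) $$ (i - t, m - t)"
    by (rule index_mult_mat_sum[OF adj D, symmetric]) (use ti m in auto)
  also have "\<dots> = (if m = i then trailing_minor A t else 0)"
    unfolding adj_mat(3)[OF D] trailing_minor_def using ti m by auto
  finally show ?thesis .
qed

section \<open>Bezout identities in an elementary divisor domain\<close>

lemma elementary_divisor_domain_bezout:
  fixes x y :: "'a::idom_divide"
  assumes "elementary_divisor_domain TYPE('a)"
  obtains u v where "u * x + v * y dvd x" "u * x + v * y dvd y"
proof -
  define A :: "'a mat" where "A = mat 1 2 (\<lambda>(i,j). if j = 0 then x else y)"
  have A: "A \<in> carrier_mat 1 2" unfolding A_def by simp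
  obtain D where D: "d_matrix D" "mat_equiv A D"
    using assms A unfolding elementary_divisor_domain_def by blast
  obtain P Q where PQ: "P \<in> GL 1" "Q \<in> GL 2" "D = P * A * Q"
    using D(2) A unfolding mat_equiv_def by auto
  have P: "P \<in> carrier_mat 1 1" "invertible_mat P" and Q: "Q \<in> carrier_mat 2 2" "invertible_mat Q"
    using PQ(1,2) unfolding GL_def by auto
  obtain P' where P': "P' \<in> carrier_mat 1 1" "P' * P = 1\<^sub>m 1"
    using invertible_mat_obtain_inverse[OF P] by metis
  obtain Q' where Q': "Q' \<in> carrier_mat 2 2" "Q * Q' = 1\<^sub>m 2"
    using invertible_mat_obtain_inverse[OF Q] by metis
  have Dc: "D \<in> carrier_mat 1 2" using PQ(3) P Q A by auto
  have D01: "D $$ (0,1) = 0" using D(1) Dc unfolding d_matrix_def by auto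
  have "D $$ (0,0) = (\<Sum>k = 0..<2. (P * A) $$ (0,k) * Q $$ (k,0))"
    unfolding PQ(3) using P A Q by (intro index_mult_mat_sum) auto
  hence comb: "D $$ (0,0) = (P $$ (0,0) * Q $$ (0,0)) * x + (P $$ (0,0) * Q $$ (1,0)) * y"
    using P A by (simp add: scalar_prod_def numeral_2_eq_2 A_def algebra_simps)
  have "P' * D = P' * (P * A) * Q"
    unfolding PQ(3) using assoc_mult_mat[OF P'(1) mult_carrier_mat[OF P(1) A] Q(1)] by simp
  also have "P' * (P * A) = A" using assoc_mult_mat[OF P'(1) P(1) A] P'(2) A by simp
  finally have "P' * D * Q' = A * (Q * Q')" using assoc_mult_mat[OF A Q(1) Q'(1)] by simp
  hence AD: "A = P' * D * Q'" using Q'(2) A by simp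
  have "A $$ (0,j) = P' $$ (0,0) * D $$ (0,0) * Q' $$ (0,j)" if "j < 2" for j
  proof -
    have "A $$ (0,j) = (\<Sum>k = 0..<2. (P' * D) $$ (0,k) * Q' $$ (k,j))"
      unfolding AD using P' Dc Q' that by (intro index_mult_mat_sum) auto
    thus ?thesis using P' Dc D01 by (simp add: scalar_prod_def numeral_2_eq_2)
  qed
  from this[of 0] this[of 1] have "D $$ (0,0) dvd x" "D $$ (0,0) dvd y"
    by (simp_all add: A_def)
  thus thesis using that comb by simp
qed

lemma is_gcd_funD:
  assumes "is_gcd_fun g"
  shows "g a b dvd a" "g a b dvd b" "d dvd a \<Longrightarrow> d dvd b \<Longrightarrow> d dvd g a b"
  using assms unfolding is_gcd_fun_def by auto

lemma gcd_fun_bezout: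
  fixes x y :: "'a::idom_divide"
  assumes "elementary_divisor_domain TYPE('a)" "is_gcd_fun g"
  obtains u v where "g x y = u * x + v * y"
proof -
  obtain u v where d: "u * x + v * y dvd x" "u * x + v * y dvd y"
    using elementary_divisor_domain_bezout[OF assms(1)] by metis
  obtain z where "g x y = (u * x + v * y) * z"
    using is_gcd_funD[OF assms(2)] d by (metis dvdE)
  thus thesis using that[of "z * u" "z * v"] by (simp add: algebra_simps)
qed

lemma gcd_fun_unit_bezout:
  fixes x y :: "'a::idom_divide"
  assumes "elementary_divisor_domain TYPE('a)" "is_gcd_fun g" "g x y dvd 1"
  obtains u v where "u * x + v * y = 1"
proof -
  obtain u v where uv: "g x y = u * x + v * y" using gcd_fun_bezout[OF assms(1,2)] by metis
  obtain w where "1 = g x y * w" using assms(3) by (elim dvdE)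
  thus thesis using uv that[of "w * u" "w * v"] by (simp add: algebra_simps)
qed

lemma div_gcd_fun_dvd:
  fixes p x e :: "'a::idom_divide"
  assumes edd: "elementary_divisor_domain TYPE('a)" and g: "is_gcd_fun g"
    and "p \<noteq> 0" and "p dvd x * e"
  shows "p div g p e dvd x"
proof -
  obtain h where h_def: "h = g p e" by simp
  obtain \<alpha> \<beta> where \<alpha>: "p = h * \<alpha>" and \<beta>: "e = h * \<beta>"
    using is_gcd_funD[OF g] unfolding h_def by (metis dvdE)
  have h: "h \<noteq> 0" using \<alpha> \<open>p \<noteq> 0\<close> by auto
  obtain u v where "h = u * p + v * e" using gcd_fun_bezout[OF edd g] unfolding h_def by metis
  hence "h * 1 = h * (u * \<alpha> + v * \<beta>)" unfolding \<alpha> \<beta> by (simp add: algebra_simps)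
  hence one: "u * \<alpha> + v * \<beta> = 1" using h by (metis mult_left_cancel)
  obtain c where "x * e = p * c" using \<open>p dvd x * e\<close> by (elim dvdE)
  hence "h * (x * \<beta>) = h * (\<alpha> * c)" unfolding \<alpha> \<beta> by (simp add: algebra_simps)
  hence xb: "x * \<beta> = \<alpha> * c" using h by simp
  have "x = x * (u * \<alpha> + v * \<beta>)" using one by simp
  also have "\<dots> = \<alpha> * (x * u + v * c)" using xb by (simp add: algebra_simps)
  finally have x: "x = \<alpha> * (x * u + v * c)" .
  have "p div h = \<alpha>" using \<alpha> h by simp
  hence "p div h dvd \<alpha> * (x * u + v * c)" by simp
  thus ?thesis using h_def x[symmetric] by (simp only:)
qed

locale kazimirskii_setting =
  fixes E Phi :: "'a::idom_divide mat" and n :: nat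
    and g :: "'a \<Rightarrow> 'a \<Rightarrow> 'a" and K :: "'a \<Rightarrow> 'a set"
  assumes edd: "elementary_divisor_domain TYPE('a)"
    and gcd: "is_gcd_fun g"
    and res: "is_residue_system K"
    and E: "E \<in> carrier_mat n n" "d_matrix E"
    and Phi: "Phi \<in> carrier_mat n n" "d_matrix Phi" "det Phi \<noteq> 0"
    and phi_dvd_eps: "\<forall>i < n. Phi $$ (i,i) dvd E $$ (i,i)"
begin

abbreviation phi where "phi l \<equiv> Phi $$ (l,l)"
abbreviation eps where "eps l \<equiv> E $$ (l,l)"

definition ratio where "ratio i j = phi i div phi j"
definition coef where "coef i j = phi i div g (phi i) (eps j)"
definition modulus where "modulus i j = g (phi i) (eps j) div phi j"

lemma phi_nonzero: "l < n \<Longrightarrow> phi l \<noteq> 0"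
  using d_matrix_diag_nonzero Phi by blast

lemma phi_dvd_phi: "l \<le> m \<Longrightarrow> m < n \<Longrightarrow> phi l dvd phi m"
  using d_matrix_diag_dvd Phi by blast

lemma eps_dvd_eps: "l \<le> m \<Longrightarrow> m < n \<Longrightarrow> eps l dvd eps m"
  using d_matrix_diag_dvd E by blast

lemma phi_mult_ratio: "l \<le> i \<Longrightarrow> i < n \<Longrightarrow> phi l * ratio i l = phi i"
  unfolding ratio_def using phi_dvd_phi by simp

lemma ratio_mult_ratio:
  assumes "m \<le> l" "l \<le> i" "i < n"
  shows "ratio i l * ratio l m = ratio i m"
proof -
  have "phi m * (ratio i l * ratio l m) = (phi m * ratio l m) * ratio i l" by (simp add: ac_simps)
  also have "\<dots> = phi i" using phi_mult_ratio[of m l] phi_mult_ratio[of l i] assms by simp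
  also have "\<dots> = phi m * ratio i m" using phi_mult_ratio[of m i] assms by simp
  finally have "phi m * (ratio i l * ratio l m) = phi m * ratio i m" .
  thus ?thesis using phi_nonzero[of m] assms by simp
qed

lemma ratio_self: "i < n \<Longrightarrow> ratio i i = 1"
  unfolding ratio_def using phi_nonzero by simp

lemma ratio_dvd_ratio: "m \<le> l \<Longrightarrow> l \<le> i \<Longrightarrow> i < n \<Longrightarrow> ratio i l dvd ratio i m"
  using ratio_mult_ratio[of m l i, symmetric] by simp

lemma coef_mult_modulus:
  assumes "j \<le> i" "i < n"
  shows "coef i j * modulus i j = ratio i j"
proof -
  let ?h = "g (phi i) (eps j)"
  have "phi j dvd ?h"
    using is_gcd_funD(3)[OF gcd phi_dvd_phi[OF assms]] phi_dvd_eps assms by auto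
  then obtain w where w: "?h = phi j * w" by (elim dvdE)
  hence "modulus i j = w" unfolding modulus_def using phi_nonzero[of j] assms by simp
  hence "phi j * (coef i j * modulus i j) = (phi j * w) * coef i j" by (simp add: ac_simps)
  also have "\<dots> = ?h * coef i j" using w by simp
  also have "\<dots> = phi i" unfolding coef_def using is_gcd_funD(1)[OF gcd] by simp
  also have "\<dots> = phi j * ratio i j" using phi_mult_ratio[OF assms] by simp
  finally have "phi j * (coef i j * modulus i j) = phi j * ratio i j" .
  thus ?thesis using phi_nonzero[of j] assms by simp
qed

lemma coef_nonzero:
  assumes "j \<le> i" "i < n"
  shows "coef i j \<noteq> 0"
proof
  assume "coef i j = 0"
  hence "phi i = 0" using coef_mult_modulus[OF assms] phi_mult_ratio[OF assms] by simp
  thus False using phi_nonzero assms(2) by blast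
qed

lemma phi_dvd_coef_mult_eps: "phi i dvd coef i j * eps j"
proof -
  obtain w where "eps j = g (phi i) (eps j) * w"
    using is_gcd_funD(2)[OF gcd, of "phi i" "eps j"] by (elim dvdE)
  hence "coef i j * eps j = (g (phi i) (eps j) * coef i j) * w" by (simp add: ac_simps)
  also have "g (phi i) (eps j) * coef i j = phi i"
    unfolding coef_def using is_gcd_funD(1)[OF gcd] by simp
  finally show ?thesis by simp
qed

lemma residue_coef_unique:
  assumes "j < r" "r < n" "k \<in> K (modulus r j)" "k' \<in> K (modulus r j)"
    and "ratio r j dvd coef r j * k' - coef r j * k"
  shows "k = k'"
proof -
  obtain c where "coef r j * k' - coef r j * k = ratio r j * c" using assms(5) by (elim dvdE)
  hence "coef r j * (k' - k) = coef r j * (modulus r j * c)"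
    using coef_mult_modulus[of j r] assms(1,2) by (simp add: right_diff_distrib mult.assoc)
  hence "k' - k = modulus r j * c" using coef_nonzero[of j r] assms(1,2) by simp
  hence "modulus r j dvd -(k - k')" by simp
  hence "modulus r j dvd k - k'" by (simp only: dvd_minus_iff)
  moreover have "modulus r j dvd k - k" by simp
  ultimately show ?thesis
    using res assms(3,4) unfolding is_residue_system_def by blast
qed

lemma ratio_dvd_entry:
  assumes H: "H \<in> carrier_mat n n" and X: "X \<in> carrier_mat n n" and HX: "H * Phi = Phi * X"
    and ij: "j \<le> i" "i < n"
  shows "ratio i j dvd H $$ (i,j)"
proof -
  have "H $$ (i,j) * phi j = phi i * X $$ (i,j)"
    using mult_diagonal_mat_right[OF H Phi(1) d_matrix_diagonal_mat[OF Phi(2)], of i j]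
      mult_diagonal_mat_left[OF X Phi(1) d_matrix_diagonal_mat[OF Phi(2)], of i j] HX ij by simp
  hence "phi j * H $$ (i,j) = phi j * (ratio i j * X $$ (i,j))"
    using phi_mult_ratio[OF ij] by (simp add: ac_simps)
  thus ?thesis using phi_nonzero[of j] ij by simp
qed

lemma G_Phi_iff:
  "H \<in> G_Phi Phi \<longleftrightarrow> H \<in> carrier_mat n n \<and> det H dvd 1 \<and>
     (\<forall>i j. j < i \<and> i < n \<longrightarrow> ratio i j dvd H $$ (i,j))"
proof safe
  assume "H \<in> G_Phi Phi"
  then obtain X where H: "H \<in> carrier_mat n n" "invertible_mat H"
    and X: "X \<in> carrier_mat n n" "H * Phi = Phi * X"
    using Phi(1) unfolding G_Phi_def GL_def by auto
  show "H \<in> carrier_mat n n" "det H dvd 1"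
    using H invertible_mat_iff_det_dvd_1 by auto
  fix i j assume "j < i" "i < n"
  thus "ratio i j dvd H $$ (i,j)" using ratio_dvd_entry[OF H(1) X] by simp
next
  assume H: "H \<in> carrier_mat n n" and u: "det H dvd 1"
    and d: "\<forall>i j. j < i \<and> i < n \<longrightarrow> ratio i j dvd H $$ (i,j)"
  define X where "X = mat n n (\<lambda>(i,j). H $$ (i,j) * phi j div phi i)"
  have X: "X \<in> carrier_mat n n" unfolding X_def by simp
  have dvd: "phi i dvd H $$ (i,j) * phi j" if "i < n" "j < n" for i j
  proof (cases "j < i")
    case True
    hence "ratio i j dvd H $$ (i,j)" using d that by blast
    then obtain c where "H $$ (i,j) = ratio i j * c" by (elim dvdE)
    hence "H $$ (i,j) * phi j = phi i * c" using phi_mult_ratio[of j i] True that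
      by (simp add: ac_simps)
    thus ?thesis by simp
  qed (use phi_dvd_phi that in simp)
  have HX: "H * Phi = Phi * X"
  proof (rule eq_matI)
    fix i j assume "i < dim_row (Phi * X)" "j < dim_col (Phi * X)"
    hence ij: "i < n" "j < n" using X Phi(1) by auto
    show "(H * Phi) $$ (i,j) = (Phi * X) $$ (i,j)"
      unfolding mult_diagonal_mat_right[OF H Phi(1) d_matrix_diagonal_mat[OF Phi(2)] ij]
        mult_diagonal_mat_left[OF X Phi(1) d_matrix_diagonal_mat[OF Phi(2)] ij]
      using dvd[OF ij] ij unfolding X_def by simp
  qed (use H X Phi(1) in auto)
  have "det Phi * det X = det Phi * det H"
    using det_mult[OF Phi(1) X] det_mult[OF H Phi(1)] HX by (simp add: ac_simps)
  hence "det X dvd 1" using u Phi(3) by simp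
  thus "H \<in> G_Phi Phi" unfolding G_Phi_def GL_def
    using H X HX u Phi(1) invertible_mat_iff_det_dvd_1 by auto
qed

lemma L_set_iff:
  "L \<in> L_set E Phi \<longleftrightarrow> L \<in> carrier_mat n n \<and> invertible_mat L \<and>
     (\<forall>l j. l < n \<and> j < n \<longrightarrow> phi l dvd L $$ (l,j) * eps j)"
proof -
  have entry: "(L * E) $$ (l,j) = L $$ (l,j) * eps j" "(Phi * S) $$ (l,j) = phi l * S $$ (l,j)"
    if "L \<in> carrier_mat n n" "S \<in> carrier_mat n n" "l < n" "j < n" for L S l j
    using mult_diagonal_mat_right[OF that(1) E(1) d_matrix_diagonal_mat[OF E(2)] that(3,4)]
      mult_diagonal_mat_left[OF that(2) Phi(1) d_matrix_diagonal_mat[OF Phi(2)] that(3,4)] by auto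
  show ?thesis
  proof safe
    assume "L \<in> L_set E Phi"
    then obtain S where L: "L \<in> carrier_mat n n" "invertible_mat L"
      and S: "S \<in> carrier_mat n n" "L * E = Phi * S"
      using Phi(1) unfolding L_set_def GL_def by auto
    show "L \<in> carrier_mat n n" "invertible_mat L" using L by auto
    fix l j assume "l < n" "j < n"
    hence "L $$ (l,j) * eps j = phi l * S $$ (l,j)" using entry[OF L(1) S(1)] S(2) by simp
    thus "phi l dvd L $$ (l,j) * eps j" by simp
  next
    assume L: "L \<in> carrier_mat n n" "invertible_mat L"
      and d: "\<forall>l j. l < n \<and> j < n \<longrightarrow> phi l dvd L $$ (l,j) * eps j"
    define S where "S = mat n n (\<lambda>(i,j). L $$ (i,j) * eps j div phi i)"
    have S: "S \<in> carrier_mat n n" unfolding S_def by simp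
    have "L * E = Phi * S"
      by (rule eq_matI) (use L S E(1) Phi(1) d entry[OF L(1) S] in \<open>auto simp: S_def\<close>)
    thus "L \<in> L_set E Phi" unfolding L_set_def GL_def using L S Phi(1) by auto
  qed
qed

lemma V_set_iff:
  "V \<in> V_set g K E Phi \<longleftrightarrow> V \<in> carrier_mat n n \<and> (\<forall>i<n. V $$ (i,i) = 1) \<and>
     (\<forall>i j. i < j \<and> j < n \<longrightarrow> V $$ (i,j) = 0) \<and>
     (\<forall>i j. j < i \<and> i < n \<longrightarrow> (\<exists>k \<in> K (modulus i j). V $$ (i,j) = coef i j * k))"
  unfolding V_set_def coef_def modulus_def using Phi(1) by auto

definition divisor_condition where
  "divisor_condition \<longleftrightarrow> (\<forall>i. 1 \<le> i \<and> i < n \<and> \<not> (phi i dvd phi (i-1) \<and> phi (i-1) dvd phi i) \<longrightarrow>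
     (\<forall>\<delta>. \<delta> dvd ratio i (i-1) \<and> \<not> \<delta> dvd 1 \<longrightarrow> \<not> g \<delta> (coef i (i-1)) dvd 1))"

section \<open>Uniqueness\<close>

lemma V_set_eq_of_banded_mult:
  assumes G: "G \<in> carrier_mat n n"
    and G_band: "\<And>i j. j < i \<Longrightarrow> i < n \<Longrightarrow> ratio i j dvd G $$ (i,j)"
    and V: "V \<in> V_set g K E Phi" and V': "V' \<in> V_set g K E Phi" and GV: "G * V = V'"
  shows "V = V'"
proof -
  note VI = V[unfolded V_set_iff] and VI' = V'[unfolded V_set_iff]
  \<comment> \<open>Once \<open>G\<close> is the identity to the right of column \<open>j\<close>, column \<open>j\<close> of \<open>G * V\<close> is column \<open>j\<close>
    of \<open>V\<close> plus column \<open>j\<close> of \<open>G\<close>; the residue systems then force the latter to be a unit vector.\<close>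
  have "\<forall>c r. j \<le> c \<longrightarrow> c < n \<longrightarrow> r < n \<longrightarrow>
      V $$ (r,c) = V' $$ (r,c) \<and> G $$ (r,c) = (if r = c then 1 else 0)" if "j \<le> n" for j
    using that
  proof (induction j rule: inc_induct)
    case (step j)
    have "G $$ (r,c) = (if r = c then 1 else 0)" if "j < c" "c < n" "r < n" for r c
      using step.IH that by simp
    hence col: "V' $$ (r,j) = G $$ (r,j) + (if j < r then V $$ (r,j) else 0)" if "r < n" for r
      unfolding GV[symmetric] using VI step.hyps that by (intro mult_col_unitriangular[OF G]) auto
    have new_col: "V $$ (r,j) = V' $$ (r,j) \<and> G $$ (r,j) = (if r = j then 1 else 0)"
      if r: "r < n" for r
    proof (cases j r rule: linorder_cases)
      case less
      obtain k where k: "k \<in> K (modulus r j)" "V $$ (r,j) = coef r j * k" using VI less r by blast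
      obtain k' where k': "k' \<in> K (modulus r j)" "V' $$ (r,j) = coef r j * k'" using VI' less r by blast
      have "ratio r j dvd coef r j * k' - coef r j * k"
        using col[OF r] less k k' G_band[OF less r] by simp
      hence "k = k'" by (rule residue_coef_unique[OF less r k(1) k'(1)])
      thus ?thesis using col[OF r] less k k' by simp
    qed (use col[OF r] VI VI' r step.hyps in auto)
    show ?case
    proof (intro allI impI)
      fix c r assume "j \<le> c" "c < n" "r < n"
      thus "V $$ (r,c) = V' $$ (r,c) \<and> G $$ (r,c) = (if r = c then 1 else 0)"
        using step.IH new_col by (cases "c = j") auto
    qed
  qed simp
  hence "\<And>r c. r < n \<Longrightarrow> c < n \<Longrightarrow> V $$ (r,c) = V' $$ (r,c)" by blast
  thus ?thesis using VI VI' by (intro eq_matI) auto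
qed

lemma V_set_class_unique:
  assumes L: "L \<in> carrier_mat n n" and H: "H \<in> G_Phi Phi" and H': "H' \<in> G_Phi Phi"
    and V: "V \<in> V_set g K E Phi" and V': "V' \<in> V_set g K E Phi"
    and VH: "V = H * L" and VH': "V' = H' * L"
  shows "V = V'"
proof -
  obtain X where H_inv: "invertible_mat H" and X: "X \<in> carrier_mat n n" "invertible_mat X" "H * Phi = Phi * X"
    using H Phi(1) unfolding G_Phi_def GL_def by auto
  obtain X' where X': "X' \<in> carrier_mat n n" "H' * Phi = Phi * X'"
    using H' Phi(1) unfolding G_Phi_def GL_def by auto
  have Hc: "H \<in> carrier_mat n n" and Hc': "H' \<in> carrier_mat n n" using H H' G_Phi_iff by auto
  obtain Hi where Hi: "Hi \<in> carrier_mat n n" "H * Hi = 1\<^sub>m n" "Hi * H = 1\<^sub>m n"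
    using invertible_mat_obtain_inverse[OF Hc H_inv] by metis
  obtain Xi where Xi: "Xi \<in> carrier_mat n n" "X * Xi = 1\<^sub>m n"
    using invertible_mat_obtain_inverse[OF X(1,2)] by metis
  have "Hi * Phi = Hi * (Phi * X) * Xi"
    using Hi Phi(1) X Xi by (simp add: assoc_mult_mat[of _ n n _ n _ n])
  also have "\<dots> = (Hi * H) * Phi * Xi"
    unfolding X(3)[symmetric] by (simp only: assoc_mult_mat[OF Hi(1) Hc Phi(1)])
  also have "\<dots> = Phi * Xi" using Hi(3) Phi(1) Xi by simp
  finally have "H' * Hi * Phi = H' * (Phi * Xi)"
    using Hc' Hi Phi(1) by (simp add: assoc_mult_mat[of _ n n _ n _ n])
  also have "\<dots> = (H' * Phi) * Xi"
    using Hc' Phi(1) Xi by (simp add: assoc_mult_mat[of _ n n _ n _ n])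
  also have "\<dots> = Phi * (X' * Xi)"
    unfolding X'(2) using Phi(1) X' Xi by (simp add: assoc_mult_mat[of _ n n _ n _ n])
  finally have GPhi: "H' * Hi * Phi = Phi * (X' * Xi)" .
  have "H' * Hi * V = H' * (Hi * H) * L"
    unfolding VH by (simp only: assoc_mult_mat[OF mult_carrier_mat[OF Hc' Hi(1)] Hc L, symmetric]
      assoc_mult_mat[OF Hc' Hi(1) Hc])
  hence GV: "H' * Hi * V = V'" unfolding VH' using Hi(3) Hc' L by simp
  have Gc: "H' * Hi \<in> carrier_mat n n" using Hc' Hi by auto
  have "ratio r c dvd (H' * Hi) $$ (r,c)" if "c < r" "r < n" for r c
    using ratio_dvd_entry[OF Gc _ GPhi] X' Xi that by simp
  thus ?thesis by (rule V_set_eq_of_banded_mult[OF Gc _ V V' GV])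
qed

section \<open>Necessity of the divisor condition\<close>

lemma class_without_V_set:
  assumes i: "1 \<le> i" "i < n" and \<delta>: "\<delta> dvd ratio i (i-1)" "\<not> \<delta> dvd 1"
    and coprime: "g \<delta> (coef i (i-1)) dvd 1"
  obtains L where "L \<in> L_set E Phi" "\<nexists>V. V \<in> V_set g K E Phi \<and> V \<in> {H * L | H. H \<in> G_Phi Phi}"
proof -
  define p where "p = i - 1"
  have p: "p < n" "p \<noteq> i" "p \<le> i" using i unfolding p_def by auto
  define \<alpha> where "\<alpha> = coef i p"
  obtain u v where uv: "u * \<delta> + v * \<alpha> = 1"
    using gcd_fun_unit_bezout[OF edd gcd coprime] unfolding \<alpha>_def p_def by metis
  define L where "L = embed_block n {p,i} (\<lambda>r c. if r = p then (if c = p then u else - v)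
    else (if c = p then \<alpha> else \<delta>))"
  have Lc: "L \<in> carrier_mat n n" unfolding L_def by (rule embed_block_carrier)
  have "invertible_mat L"
    unfolding L_def using p i uv by (intro invertible_embed_block_2x2) (auto simp: algebra_simps)
  moreover have "phi r dvd L $$ (r,c) * eps c" if "r < n" "c < n" for r c
  proof -
    have "phi p dvd eps i" using dvd_trans[OF phi_dvd_phi[OF p(3) i(2)]] phi_dvd_eps i(2) by blast
    thus ?thesis using that p i phi_dvd_eps phi_dvd_coef_mult_eps[of i p]
      by (auto simp: L_def embed_block_def \<alpha>_def)
  qed
  ultimately have L: "L \<in> L_set E Phi" unfolding L_set_iff using Lc by blast
  have "\<nexists>V. V \<in> V_set g K E Phi \<and> V \<in> {H * L | H. H \<in> G_Phi Phi}"
  proof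
    \<comment> \<open>\<open>(H * L) $$ (i,i)\<close> is a multiple of \<open>\<delta>\<close>, since \<open>\<delta>\<close> divides \<open>H $$ (i,p)\<close> for \<open>H \<in> G_Phi Phi\<close>.\<close>
    assume "\<exists>V. V \<in> V_set g K E Phi \<and> V \<in> {H * L | H. H \<in> G_Phi Phi}"
    then obtain H where V: "H * L \<in> V_set g K E Phi" and H: "H \<in> G_Phi Phi" by auto
    have Hc: "H \<in> carrier_mat n n" using H G_Phi_iff by blast
    have "(H * L) $$ (i,i) = (\<Sum>k = 0..<n. if k = p then - (H $$ (i,p) * v)
        else if k = i then H $$ (i,i) * \<delta> else 0)"
      unfolding index_mult_mat_sum[OF Hc Lc i(2) i(2)]
      by (rule sum.cong) (use p i in \<open>auto simp: L_def embed_block_def\<close>)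
    also have "\<dots> = H $$ (i,i) * \<delta> - H $$ (i,p) * v"
      using p i by (simp add: sum.If_cases)
    also have "\<delta> dvd \<dots>"
    proof (rule dvd_diff)
      have "ratio i p dvd H $$ (i,p)" using H i p unfolding G_Phi_iff p_def by simp
      thus "\<delta> dvd H $$ (i,p) * v" using \<delta>(1) unfolding p_def by (blast intro: dvd_mult2 dvd_trans)
    qed simp
    finally have "\<delta> dvd 1" using V i(2) unfolding V_set_iff by simp
    thus False using \<delta>(2) by blast
  qed
  thus thesis using L that by blast
qed

lemma divisor_condition_necessary:
  assumes "\<forall>L \<in> L_set E Phi. \<exists>!V. V \<in> V_set g K E Phi \<and> V \<in> {H * L | H. H \<in> G_Phi Phi}"
  shows divisor_condition
  unfolding divisor_condition_def
proof (intro allI impI notI)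
  fix i \<delta>
  assume i: "1 \<le> i \<and> i < n \<and> \<not> (phi i dvd phi (i-1) \<and> phi (i-1) dvd phi i)"
    and \<delta>: "\<delta> dvd ratio i (i-1) \<and> \<not> \<delta> dvd 1" and coprime: "g \<delta> (coef i (i-1)) dvd 1"
  obtain L where "L \<in> L_set E Phi"
    and "\<nexists>V. V \<in> V_set g K E Phi \<and> V \<in> {H * L | H. H \<in> G_Phi Phi}"
    by (rule class_without_V_set[of i \<delta>]) (use i \<delta> coprime in auto)
  thus False using assms by blast
qed

section \<open>Existence under the divisor condition\<close>

lemma coef_dvd_lower_left:
  assumes L: "L \<in> L_set E Phi" and i: "1 \<le> i" "i \<le> l" "l < n" "j < i"
  shows "coef i (i-1) dvd L $$ (l,j)"
proof -
  have "phi i dvd phi l" using phi_dvd_phi i by simp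
  also have "phi l dvd L $$ (l,j) * eps j" using L i unfolding L_set_iff by simp
  also have "\<dots> dvd L $$ (l,j) * eps (i-1)" using eps_dvd_eps[of j "i-1"] i by (simp add: mult_dvd_mono)
  finally have "phi i dvd L $$ (l,j) * eps (i-1)" .
  from div_gcd_fun_dvd[OF edd gcd phi_nonzero this] i show ?thesis unfolding coef_def by simp
qed

lemma trailing_minor_coef_coprime:
  assumes L: "L \<in> L_set E Phi" and i: "1 \<le> i" "i < n"
  shows "g (trailing_minor L i) (coef i (i-1)) dvd 1"
proof -
  let ?d = "g (trailing_minor L i) (coef i (i-1))"
  have Lc: "L \<in> carrier_mat n n" and "invertible_mat L" using L unfolding L_set_iff by auto
  hence unit: "det L dvd 1" using invertible_mat_iff_det_dvd_1 by blast
  \<comment> \<open>Modulo \<open>coef i (i-1)\<close>, the matrix \<open>L\<close> is block upper triangular.\<close>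
  have "coef i (i-1) dvd det L - det (mat i i (\<lambda>(r,c). L $$ (r,c))) * trailing_minor L i"
    by (rule dvd_det_diff_block[OF Lc]) (use coef_dvd_lower_left[OF L i(1)] i in auto)
  then obtain z where "det L = det (mat i i (\<lambda>(r,c). L $$ (r,c))) * trailing_minor L i + coef i (i-1) * z"
    by (metis dvdE diff_eq_eq add.commute)
  moreover have "?d dvd trailing_minor L i" "?d dvd coef i (i-1)" using is_gcd_funD[OF gcd] by auto
  ultimately have "?d dvd det L" by (simp add: dvd_add dvd_mult dvd_mult2)
  thus ?thesis using unit by (rule dvd_trans)
qed

lemma trailing_minor_ratio_bezout:
  assumes cond: divisor_condition and L: "L \<in> L_set E Phi" and i: "1 \<le> i" "i < n"
  obtains u v where "u * trailing_minor L i + v * ratio i (i-1) = 1"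
proof -
  let ?\<delta> = "g (trailing_minor L i) (ratio i (i-1))"
  have \<delta>: "?\<delta> dvd trailing_minor L i" "?\<delta> dvd ratio i (i-1)" using is_gcd_funD[OF gcd] by auto
  have "?\<delta> dvd 1"
  proof (cases "phi i dvd phi (i-1) \<and> phi (i-1) dvd phi i")
    case True
    then obtain w where w: "phi (i-1) = phi i * w" by (auto elim!: dvdE)
    have "phi i * 1 = phi i * (w * ratio i (i-1))"
      using phi_mult_ratio[of "i-1" i] i w by (simp add: ac_simps)
    hence "ratio i (i-1) dvd 1" using phi_nonzero[of i] i by (metis dvdI mult.commute mult_left_cancel)
    with \<delta>(2) show ?thesis by (rule dvd_trans)
  next
    case False
    show ?thesis
    proof (rule ccontr)
      assume "\<not> ?\<delta> dvd 1"
      hence "\<not> g ?\<delta> (coef i (i-1)) dvd 1" using cond False i \<delta>(2) unfolding divisor_condition_def by blast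
      moreover have "g ?\<delta> (coef i (i-1)) dvd g (trailing_minor L i) (coef i (i-1))"
        using is_gcd_funD[OF gcd] \<delta>(1) by (meson dvd_trans)
      ultimately show False using trailing_minor_coef_coprime[OF L i] dvd_trans by blast
    qed
  qed
  thus thesis using gcd_fun_unit_bezout[OF edd gcd] that by blast
qed

lemma trailing_minors_comb:
  assumes cond: divisor_condition and L: "L \<in> L_set E Phi" and i: "i < n"
  shows "\<exists>r. (\<Sum>t = 0..i. r t * ratio i t * trailing_minor L t) = 1"
  using i
proof (induction i)
  case 0
  have Lc: "L \<in> carrier_mat n n" and "invertible_mat L" using L unfolding L_set_iff by auto
  then obtain w where "1 = det L * w" using invertible_mat_iff_det_dvd_1 by (blast elim: dvdE)
  thus ?case using trailing_minor_0[OF Lc] ratio_self[of 0] 0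
    by (intro exI[of _ "\<lambda>_. w"]) (simp add: ac_simps)
next
  case (Suc i)
  obtain r where r: "(\<Sum>t = 0..i. r t * ratio i t * trailing_minor L t) = 1" using Suc by auto
  obtain u v where uv: "u * trailing_minor L (Suc i) + v * ratio (Suc i) i = 1"
    using trailing_minor_ratio_bezout[OF cond L, of "Suc i"] Suc.prems by auto
  define r' where "r' t = (if t = Suc i then u else v * r t)" for t
  have "(\<Sum>t = 0..i. r' t * ratio (Suc i) t * trailing_minor L t)
      = v * ratio (Suc i) i * (\<Sum>t = 0..i. r t * ratio i t * trailing_minor L t)"
    unfolding sum_distrib_left
  proof (rule sum.cong[OF refl])
    fix t assume "t \<in> {0..i}"
    hence "ratio (Suc i) i * ratio i t = ratio (Suc i) t" using ratio_mult_ratio Suc.prems by simp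
    thus "r' t * ratio (Suc i) t * trailing_minor L t
        = v * ratio (Suc i) i * (r t * ratio i t * trailing_minor L t)"
      using \<open>t \<in> {0..i}\<close> unfolding r'_def by (simp add: ac_simps)
  qed
  hence "(\<Sum>t = 0..Suc i. r' t * ratio (Suc i) t * trailing_minor L t) = 1"
    using ratio_self[of "Suc i"] Suc.prems r uv by (simp add: r'_def ac_simps)
  thus ?case by blast
qed

text \<open>\<open>y\<close> is the \<open>i\<close>-th row of \<open>H * L\<close> for some \<open>H\<close> whose \<open>i\<close>-th row satisfies the divisibility
  conditions of \<open>G_Phi Phi\<close>.\<close>
definition admissible_row where
  "admissible_row L i y \<longleftrightarrow> (\<exists>x. (\<forall>l<i. ratio i l dvd x l) \<and>
     (\<forall>m<n. y m = (\<Sum>l = 0..<n. x l * L $$ (l,m))))"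

lemma unit_row_exists:
  assumes cond: divisor_condition and L: "L \<in> L_set E Phi" and i: "i < n"
  obtains y where "admissible_row L i y" "y i = 1" "\<And>m. i < m \<Longrightarrow> m < n \<Longrightarrow> y m = 0"
proof -
  have Lc: "L \<in> carrier_mat n n" using L unfolding L_set_iff by simp
  obtain r where r: "(\<Sum>t = 0..i. r t * ratio i t * trailing_minor L t) = 1"
    using trailing_minors_comb[OF cond L i] by blast
  define x where "x l = (\<Sum>t = 0..i. r t * ratio i t * trailing_adj_row L t i l)" for l
  define y where "y m = (\<Sum>l = 0..<n. x l * L $$ (l,m))" for m
  have "ratio i l dvd x l" if "l < i" for l
    unfolding x_def
  proof (rule dvd_sum)
    fix t assume t: "t \<in> {0..i}"
    show "ratio i l dvd r t * ratio i t * trailing_adj_row L t i l"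
    proof (cases "t \<le> l")
      case True
      hence "ratio i l dvd ratio i t" using ratio_dvd_ratio that i by simp
      thus ?thesis by (rule dvd_mult2[OF dvd_mult])
    qed (simp add: trailing_adj_row_def)
  qed
  hence "admissible_row L i y" unfolding admissible_row_def y_def by blast
  moreover have "y m = (if m = i then 1 else 0)" if "i \<le> m" "m < n" for m
  proof -
    have "y m = (\<Sum>t = 0..i. r t * ratio i t * (\<Sum>l = 0..<n. trailing_adj_row L t i l * L $$ (l,m)))"
      unfolding y_def x_def sum_distrib_right sum_distrib_left
      by (subst sum.swap) (simp add: ac_simps)
    also have "\<dots> = (\<Sum>t = 0..i. r t * ratio i t * (if m = i then trailing_minor L t else 0))"
      using trailing_adj_row_mult[OF Lc _ i] that by simp
    finally show ?thesis using r by simp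
  qed
  ultimately show thesis using that i by simp
qed

lemma admissible_row_coef_dvd:
  assumes L: "L \<in> L_set E Phi" and y: "admissible_row L i y" and ji: "j < i" "i < n"
  shows "coef i j dvd y j"
proof -
  obtain x where x: "\<forall>l<i. ratio i l dvd x l" "\<forall>m<n. y m = (\<Sum>l = 0..<n. x l * L $$ (l,m))"
    using y unfolding admissible_row_def by blast
  hence yj: "y j = (\<Sum>l = 0..<n. x l * L $$ (l,j))" using ji by simp
  have "phi i dvd y j * eps j"
    unfolding yj sum_distrib_right
  proof (rule dvd_sum)
    fix l assume "l \<in> {0..<n}"
    hence l: "l < n" by simp
    have "phi l dvd L $$ (l,j) * eps j" using L l ji unfolding L_set_iff by simp
    have "phi i dvd phi l * x l"
    proof (cases "l < i")
      case True
      have "phi l * ratio i l dvd phi l * x l" using x(1) True by (simp add: mult_dvd_mono)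
      thus ?thesis using phi_mult_ratio[of l i] True ji by simp
    qed (use phi_dvd_phi l in simp)
    moreover have "phi l * x l dvd (L $$ (l,j) * eps j) * x l"
      using \<open>phi l dvd L $$ (l,j) * eps j\<close> by (rule mult_dvd_mono) simp
    ultimately have "phi i dvd (L $$ (l,j) * eps j) * x l" by (rule dvd_trans)
    thus "phi i dvd x l * L $$ (l,j) * eps j" by (simp add: ac_simps)
  qed
  from div_gcd_fun_dvd[OF edd gcd phi_nonzero[OF ji(2)] this] show ?thesis unfolding coef_def .
qed

lemma admissible_row_diff:
  assumes y: "admissible_row L i y" and z: "admissible_row L l z" and li: "l \<le> i" "i < n"
  shows "admissible_row L i (\<lambda>m. y m - c * ratio i l * z m)"
proof -
  obtain x where x: "\<forall>k<i. ratio i k dvd x k" "\<forall>m<n. y m = (\<Sum>k = 0..<n. x k * L $$ (k,m))"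
    using y unfolding admissible_row_def by blast
  obtain x' where x': "\<forall>k<l. ratio l k dvd x' k" "\<forall>m<n. z m = (\<Sum>k = 0..<n. x' k * L $$ (k,m))"
    using z unfolding admissible_row_def by blast
  have "ratio i k dvd x k - c * ratio i l * x' k" if k: "k < i" for k
  proof -
    have "ratio i k dvd ratio i l * x' k"
    proof (cases "k < l")
      case True
      hence "ratio l k dvd x' k" using x'(1) by blast
      then obtain w where "x' k = ratio l k * w" by (elim dvdE)
      hence "ratio i l * x' k = ratio i k * w" using ratio_mult_ratio[of k l i] True li
        by (simp add: mult.assoc[symmetric])
      thus ?thesis by simp
    next
      case False
      thus ?thesis using ratio_dvd_ratio[of l k i] k li by (simp add: dvd_mult2)
    qed
    hence "ratio i k dvd c * (ratio i l * x' k)" by (rule dvd_mult)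
    thus ?thesis using x(1) k by (simp add: dvd_diff mult.assoc)
  qed
  moreover have "y m - c * ratio i l * z m
      = (\<Sum>k = 0..<n. (x k - c * ratio i l * x' k) * L $$ (k,m))" if "m < n" for m
  proof -
    have "(\<Sum>k = 0..<n. (x k - c * ratio i l * x' k) * L $$ (k,m))
        = (\<Sum>k = 0..<n. x k * L $$ (k,m)) - (\<Sum>k = 0..<n. c * ratio i l * x' k * L $$ (k,m))"
      by (simp add: sum_subtractf left_diff_distrib)
    also have "(\<Sum>k = 0..<n. c * ratio i l * x' k * L $$ (k,m))
        = c * ratio i l * (\<Sum>k = 0..<n. x' k * L $$ (k,m))"
      by (simp add: sum_distrib_left mult.assoc)
    finally show ?thesis using x(2) x'(2) that by simp
  qed
  ultimately show ?thesis
    unfolding admissible_row_def by (intro exI[of _ "\<lambda>k. x k - c * ratio i l * x' k"]) blast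
qed

definition reduced_row where
  "reduced_row L i j y \<longleftrightarrow> admissible_row L i y \<and> y i = 1 \<and> (\<forall>m. i < m \<and> m < n \<longrightarrow> y m = 0) \<and>
     (\<forall>l. j \<le> l \<and> l < i \<longrightarrow> (\<exists>k \<in> K (modulus i l). y l = coef i l * k))"

lemma reduced_row_step:
  assumes L: "L \<in> L_set E Phi" and ji: "j < i" "i < n"
    and y: "reduced_row L i (Suc j) y" and w: "reduced_row L j 0 w"
  shows "\<exists>y'. reduced_row L i j y'"
proof -
  obtain \<kappa> where \<kappa>: "y j = coef i j * \<kappa>"
    using admissible_row_coef_dvd[OF L _ ji] y unfolding reduced_row_def by (blast elim: dvdE)
  obtain k where k: "k \<in> K (modulus i j)" "modulus i j dvd \<kappa> - k"
    using res unfolding is_residue_system_def by blast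
  then obtain c where c: "\<kappa> - k = modulus i j * c" by (elim dvdE)
  define y' where "y' m = y m - c * ratio i j * w m" for m
  have "admissible_row L i y'"
    unfolding y'_def using y w ji admissible_row_diff unfolding reduced_row_def by simp
  moreover have "y' m = y m" if "j < m" "m < n" for m
    using w that unfolding y'_def reduced_row_def by simp
  moreover have "y' j = coef i j * k"
  proof -
    have "y' j = coef i j * \<kappa> - c * (coef i j * modulus i j)"
      unfolding y'_def \<kappa> using w coef_mult_modulus[of j i] ji unfolding reduced_row_def by simp
    also have "\<dots> = coef i j * k" using c by (simp add: algebra_simps)
    finally show ?thesis .
  qed
  ultimately have "reduced_row L i j y'"
    using y k(1) ji unfolding reduced_row_def by (metis Suc_leI le_neq_implies_less less_trans)
  thus ?thesis by blast
qed

lemma reduced_row_exists: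
  assumes cond: divisor_condition and L: "L \<in> L_set E Phi"
  shows "i < n \<Longrightarrow> \<exists>y. reduced_row L i 0 y"
proof (induction i rule: less_induct)
  case (less i)
  obtain y where "admissible_row L i y" "y i = 1" "\<And>m. i < m \<Longrightarrow> m < n \<Longrightarrow> y m = 0"
    using unit_row_exists[OF cond L less.prems] by metis
  hence start: "reduced_row L i i y" unfolding reduced_row_def by auto
  have "\<exists>y. reduced_row L i j y" if "j \<le> i" for j
    using that
  proof (induction j rule: inc_induct)
    case base
    show ?case using start by blast
  next
    case (step j)
    then obtain y where "reduced_row L i (Suc j) y" by blast
    moreover obtain w where "reduced_row L j 0 w" using less.IH step.hyps less.prems by force
    ultimately show ?case using reduced_row_step[OF L] step.hyps less.prems by blast
  qed
  thus ?case by blast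
qed

lemma class_meets_V_set:
  assumes cond: divisor_condition and L: "L \<in> L_set E Phi"
  shows "\<exists>V. V \<in> V_set g K E Phi \<and> V \<in> {H * L | H. H \<in> G_Phi Phi}"
proof -
  have Lc: "L \<in> carrier_mat n n" using L unfolding L_set_iff by simp
  obtain W where W: "\<And>i. i < n \<Longrightarrow> reduced_row L i 0 (W i)"
    using reduced_row_exists[OF cond L] by metis
  obtain X where X: "\<And>i l. i < n \<Longrightarrow> l < i \<Longrightarrow> ratio i l dvd X i l"
    and WX: "\<And>i m. i < n \<Longrightarrow> m < n \<Longrightarrow> W i m = (\<Sum>l = 0..<n. X i l * L $$ (l,m))"
    using W unfolding reduced_row_def admissible_row_def by metis
  define V where "V = mat n n (\<lambda>(i,j). W i j)"
  define H where "H = mat n n (\<lambda>(i,l). X i l)"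
  have Vc: "V \<in> carrier_mat n n" and Hc: "H \<in> carrier_mat n n" unfolding V_def H_def by auto
  have HL: "H * L = V"
  proof (rule eq_matI)
    fix i j assume "i < dim_row V" "j < dim_col V"
    hence ij: "i < n" "j < n" using Vc by auto
    show "(H * L) $$ (i,j) = V $$ (i,j)"
      unfolding index_mult_mat_sum[OF Hc Lc ij] using WX ij by (simp add: H_def V_def)
  qed (use Hc Vc Lc in auto)
  have V: "V \<in> V_set g K E Phi" unfolding V_set_iff
    using Vc W unfolding reduced_row_def V_def by auto
  have "det V = prod_list (diag_mat V)"
    by (rule det_lower_triangular[OF _ Vc]) (use V in \<open>simp add: V_set_iff\<close>)
  also have "diag_mat V = replicate n 1"
    by (rule nth_equalityI) (use V Vc in \<open>auto simp: diag_mat_def V_set_iff\<close>)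
  finally have "det H * det L = 1" using det_mult[OF Hc Lc] HL by simp
  hence "H \<in> G_Phi Phi" unfolding G_Phi_iff using Hc X by (auto simp: H_def intro: dvdI)
  thus ?thesis using V HL by blast
qed

lemma divisor_condition_sufficient:
  assumes divisor_condition
  shows "\<forall>L \<in> L_set E Phi. \<exists>!V. V \<in> V_set g K E Phi \<and> V \<in> {H * L | H. H \<in> G_Phi Phi}"
proof
  fix L assume L: "L \<in> L_set E Phi"
  hence "L \<in> carrier_mat n n" unfolding L_set_iff by simp
  thus "\<exists>!V. V \<in> V_set g K E Phi \<and> V \<in> {H * L | H. H \<in> G_Phi Phi}"
    using class_meets_V_set[OF assms L] V_set_class_unique by blast
qed

end

theorem theorem5p7:
  fixes E Phi :: "'a::idom_divide mat" and n :: nat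
    and g :: "'a \<Rightarrow> 'a \<Rightarrow> 'a" and K :: "'a \<Rightarrow> 'a set"
  assumes edd: "elementary_divisor_domain TYPE('a)"
    and gcd: "is_gcd_fun g"
    and res: "is_residue_system K"
    and E: "E \<in> carrier_mat n n" "d_matrix E" "det E \<noteq> 0"
    and Phi: "Phi \<in> carrier_mat n n" "d_matrix Phi" "det Phi \<noteq> 0"
    and dv: "\<forall>i < n. Phi $$ (i,i) dvd E $$ (i,i)"
  shows "(\<forall>L \<in> L_set E Phi. \<exists>!V. V \<in> V_set g K E Phi \<and> V \<in> {H * L | H. H \<in> G_Phi Phi})
     \<longleftrightarrow>
     (\<forall>i. 1 \<le> i \<and> i < n \<and> \<not> (Phi $$ (i,i) dvd Phi $$ (i-1,i-1) \<and> Phi $$ (i-1,i-1) dvd Phi $$ (i,i)) \<longrightarrow>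
        (\<forall>\<delta>. \<delta> dvd (Phi $$ (i,i) div Phi $$ (i-1,i-1)) \<and> \<not> \<delta> dvd 1 \<longrightarrow>
           \<not> g \<delta> (Phi $$ (i,i) div g (Phi $$ (i,i)) (E $$ (i-1,i-1))) dvd 1))"
proof -
  interpret kazimirskii_setting E Phi n g K
    using edd gcd res E Phi dv by unfold_locales auto
  have "(\<forall>L \<in> L_set E Phi. \<exists>!V. V \<in> V_set g K E Phi \<and> V \<in> {H * L | H. H \<in> G_Phi Phi})
      \<longleftrightarrow> divisor_condition"
    by (rule iffI[OF divisor_condition_necessary divisor_condition_sufficient])
  thus ?thesis unfolding divisor_condition_def ratio_def coef_def .
qed

end
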